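(* Let $r$ be an even integer and $s$ any integer. Then $$\sum_{k=1}^\infty\frac{L_{2rk+s}}{L_r^{2k}(2k-1)(2k)(2k+1)}=\frac14F_s\sqrt5\ln\!\Big(\frac{\beta^rL_r+1}{\alpha^rL_r+1}\Big)+\frac14L_s\ln\!\Big(\frac{2L_r^2+1}{L_r^4}\Big)-\frac{L_s}{2}$$ $$+\frac18L_r^2F_s\sqrt5\ln\!\Big(\frac{L_r+\alpha^r}{L_r+\beta^r}\alpha^{2r}\Big)+\frac18L_r^2L_s\ln(2L_r^2+1)$$ $$-\frac{L_r^2-1}{8L_r}F_{r+s}\sqrt5\ln\!\Big(\frac{L_r+\alpha^r}{L_r+\beta^r}\alpha^{2r}\Big)-\frac{L_r^2-1}{8L_r}L_{r+s}\ln(2L_r^2+1),$$ and $$\sum_{k=1}^\infty\frac{F_{2rk+s}}{L_r^{2k}(2k-1)(2k)(2k+1)}=\frac14\frac{L_s}{\sqrt5}\ln\!\Big(\frac{\beta^rL_r+1}{\alpha^rL_r+1}\Big)+\frac14F_s\ln\!\Big(\frac{2L_r^2+1}{L_r^4}\Big)-\frac{F_s}{2}$$ $$+\frac18L_r^2\frac{L_s}{\sqrt5}\ln\!\Big(\frac{L_r+\alpha^r}{L_r+\beta^r}\alpha^{2r}\Big)+\frac18L_r^2F_s\ln(2L_r^2+1)$$ $$-\frac{L_r^2-1}{8L_r}\frac{L_{r+s}}{\sqrt5}\ln\!\Big(\frac{L_r+\alpha^r}{L_r+\beta^r}\alpha^{2r}\Big)-\frac{L_r^2-1}{8L_r}F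_{r+s}\ln(2L_r^2+1).$$
   Context: $F_n$ and $L_n$ are the Fibonacci and Lucas numbers for $n\in\mathbb Z$: $F_n=(\alpha^n-\beta^n)/(\alpha-\beta)$, $L_n=\alpha^n+\beta^n$, where $\alpha=(1+\sqrt5)/2$, $\beta=(1-\sqrt5)/2$. *)

theory Defs
  imports "HOL-Analysis.Analysis"
begin

definition fib_alpha :: real where "fib_alpha = (1 + sqrt 5) / 2"
definition fib_beta :: real where "fib_beta = (1 - sqrt 5) / 2"

definition Fib :: "int \<Rightarrow> real" where
  "Fib n = (fib_alpha powi n - fib_beta powi n) / (fib_alpha - fib_beta)"
definition Luc :: "int \<Rightarrow> real" where
  "Luc n = fib_alpha powi n + fib_beta powi n"

end

theory Submission
  imports Defs
begin

(* The partial fractions 1/((2k-1)2k(2k+1)) = 1/(2(2k-1)) - 1/(2k) + 1/(2(2k+1)) express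
   S(t) = \<Sum>k\<ge>1 t^(2k)/((2k-1)2k(2k+1)), the triple_product_series below, through the
   series of artanh t and ln(1 - t^2). For even r, Binet's formulas split both series of the
   theorem into combinations of S(a/L) and S(b/L), where a = \<alpha>^r and b = \<beta>^r are positive
   with ab = 1 and L = L_r = a + b. At these points (1 + t)/(1 - t) and 1 - t^2 factor into
   a, L + a, L + b and L, and regrouping the logarithms gives the stated closed forms. *)

definition triple_product_series :: "real \<Rightarrow> real" where
  "triple_product_series t = (t + 1/t)/2 * artanh t + ln (1 - t\<^sup>2)/2 - 1/2"

lemma artanh_series:
  fixes t :: real
  assumes "\<bar>t\<bar> < 1"
  shows "(\<lambda>n. t^(2*n+1) / (2*n+1)) sums artanh t"
proof -
  define x where "x = (1 + t)/(1 - t)"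
  have "x > 0" "(x - 1)/(x + 1) = t"
    using assms by (auto simp: x_def abs_less_iff field_simps)
  with ln_series_quadratic[of x]
  have "(\<lambda>n. 2 * (t^(2*n+1) / (2*n+1))) sums ln x" by simp
  from sums_mult[OF this, of "1/2"] show ?thesis by (simp add: x_def artanh_def)
qed

lemma ln_one_minus_square_series:
  fixes t :: real
  assumes "\<bar>t\<bar> < 1"
  shows "(\<lambda>n. t^(2*Suc n) / Suc n) sums (- ln (1 - t\<^sup>2))"
proof -
  have "\<bar>-t\<^sup>2\<bar> < 1"
    using assms by (simp add: abs_square_less_1)
  from sums_minus[OF ln_series'[OF this]]
  have "(\<lambda>n. (t\<^sup>2)^n / n) sums (- ln (1 - t\<^sup>2))" by simp
  then have "(\<lambda>n. (t\<^sup>2)^Suc n / Suc n) sums (- ln (1 - t\<^sup>2))"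
    using sums_Suc_iff[of "\<lambda>n. (t\<^sup>2)^n / n" "- ln (1 - t\<^sup>2)"] by simp
  then show ?thesis by (simp only: power_mult)
qed

lemma triple_product_series_sums:
  fixes t :: real
  assumes "\<bar>t\<bar> < 1" and "t \<noteq> 0"
  shows "(\<lambda>j. t^(2*Suc j) / ((2*real (Suc j) - 1) * (2*real (Suc j)) * (2*real (Suc j) + 1)))
           sums triple_product_series t"
proof -
  have odd_Suc: "(\<lambda>n. t^(2*Suc n+1) / (2*Suc n+1)) sums (artanh t - t)"
    using artanh_series[OF assms(1)] sums_Suc_iff[of "\<lambda>n. t^(2*n+1) / (2*n+1)"] by simp
  have "(\<lambda>n. t/2 * (t^(2*n+1) / (2*n+1)) - 1/2 * (t^(2*Suc n) / Suc n)
            + 1/(2*t) * (t^(2*Suc n+1) / (2*Suc n+1)))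
          sums (t/2 * artanh t - 1/2 * (- ln (1 - t\<^sup>2)) + 1/(2*t) * (artanh t - t))"
    by (intro sums_add sums_diff sums_mult odd_Suc artanh_series ln_one_minus_square_series assms(1))
  moreover have "t/2 * artanh t - 1/2 * (- ln (1 - t\<^sup>2)) + 1/(2*t) * (artanh t - t)
      = triple_product_series t"
    using assms(2) by (simp add: triple_product_series_def field_simps)
  moreover have "t/2 * (t^(2*n+1) / (2*n+1)) - 1/2 * (t^(2*Suc n) / Suc n)
            + 1/(2*t) * (t^(2*Suc n+1) / (2*Suc n+1))
        = t^(2*Suc n) / ((2*real (Suc n) - 1) * (2*real (Suc n)) * (2*real (Suc n) + 1))" for n
  proof -
    have "t/2 * (t^(2*n+1) / (2*n+1)) - 1/2 * (t^(2*Suc n) / Suc n)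
            + 1/(2*t) * (t^(2*Suc n+1) / (2*Suc n+1))
        = t^(2*Suc n) * (1/(2*(2*n+1)) - 1/(2*n+2) + 1/(2*(2*n+3)))"
      using assms(2) by (simp add: field_simps)
    also have "1/(2*(2*n+1)) - 1/(2*n+2) + 1/(2*(2*n+3))
        = 1 / ((2*real (Suc n) - 1) * (2*real (Suc n)) * (2*real (Suc n) + 1))"
      by (simp add: divide_simps) algebra
    finally show ?thesis by simp
  qed
  ultimately show ?thesis by simp
qed

lemma triple_product_series_at_ratio:
  fixes a b L :: real
  assumes "a > 0" "b > 0" "a * b = 1" "L = a + b"
  shows "triple_product_series (a/L)
           = (a/L + L/a)/4 * (ln a + ln (L + a)) + (ln (L + a) - ln a - 2 * ln L)/2 - 1/2"
proof -
  have "L > 0" using assms by simp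
  have "L - a = 1/a" using assms by (simp add: eq_divide_eq mult.commute)
  have minus: "1 - a/L = 1/(a*L)"
  proof -
    have "1 - a/L = (L - a)/L" using \<open>L > 0\<close> by (simp add: field_simps)
    then show ?thesis using \<open>L - a = 1/a\<close> by simp
  qed
  have plus: "1 + a/L = (L + a)/L" using \<open>L > 0\<close> by (simp add: field_simps)
  have "(1 + a/L)/(1 - a/L) = a * (L + a)" unfolding minus plus using \<open>L > 0\<close> by simp
  moreover have "1 - (a/L)\<^sup>2 = (L + a)/(a * L\<^sup>2)"
  proof -
    have "1 - (a/L)\<^sup>2 = (1 - a/L) * (1 + a/L)" by (simp add: power2_eq_square algebra_simps)
    then show ?thesis unfolding minus plus by (simp add: power2_eq_square)
  qed
  ultimately show ?thesis
    using assms(1) \<open>L > 0\<close>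
    by (simp add: triple_product_series_def artanh_def ln_mult ln_div ln_realpow)
qed

lemma triple_product_series_pair_closed_form:
  fixes a b p q L :: real
  assumes "a > 0" "b > 0" "a * b = 1" "L = a + b"
  shows "p * triple_product_series (a/L) + q * triple_product_series (b/L) =
     1/4 * (p - q) * ln ((b*L + 1)/(a*L + 1)) + 1/4 * (p + q) * ln ((2*L\<^sup>2 + 1)/L^4) - (p + q)/2
     + 1/8 * L\<^sup>2 * (p - q) * ln ((L + a)/(L + b) * a\<^sup>2) + 1/8 * L\<^sup>2 * (p + q) * ln (2*L\<^sup>2 + 1)
     - (L\<^sup>2 - 1)/(8*L) * (a*p - b*q) * ln ((L + a)/(L + b) * a\<^sup>2)
     - (L\<^sup>2 - 1)/(8*L) * (a*p + b*q) * ln (2*L\<^sup>2 + 1)"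
proof -
  have "L > 0" using assms by simp
  have "b = 1/a" using assms by (simp add: eq_divide_eq mult.commute)
  then have ln_b: "ln b = - ln a" using assms by (simp add: ln_div)
  have "b*L + 1 = b * (L + a)" "a*L + 1 = a * (L + b)" "2*L\<^sup>2 + 1 = (L + a) * (L + b)"
    using assms by (simp_all add: algebra_simps power2_eq_square)
  then have logs: "ln ((b*L + 1)/(a*L + 1)) = - 2 * ln a + ln (L + a) - ln (L + b)"
    "ln ((2*L\<^sup>2 + 1)/L^4) = ln (L + a) + ln (L + b) - 4 * ln L"
    "ln ((L + a)/(L + b) * a\<^sup>2) = ln (L + a) - ln (L + b) + 2 * ln a"
    "ln (2*L\<^sup>2 + 1) = ln (L + a) + ln (L + b)"
    using assms \<open>L > 0\<close> ln_b by (simp_all add: ln_mult ln_div ln_realpow)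
  have coeff: "(x/L + L/x)/4 = L\<^sup>2/4 - (L\<^sup>2 - 1) * x/(4*L)" if "x > 0" "x\<^sup>2 + 1 = L * x" for x
    using that \<open>L > 0\<close> by (simp add: field_simps power2_eq_square) algebra
  have "a\<^sup>2 + 1 = L * a" "b\<^sup>2 + 1 = L * b"
    using assms by (simp_all add: algebra_simps power2_eq_square)
  note coeffs = coeff[OF assms(1) this(1)] coeff[OF assms(2) this(2)]
  have swap: "b * a = 1" "L = b + a" using assms by (simp_all add: ac_simps)
  show ?thesis
    unfolding triple_product_series_at_ratio[OF assms] triple_product_series_at_ratio[OF assms(2,1) swap]
      logs coeffs ln_b
    using \<open>L > 0\<close> by (simp add: field_simps)
qed

lemma sums_triple_product_series_pair:
  fixes a b p q L :: real
  assumes "a > 0" "b > 0" "L = a + b"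
  shows "(\<lambda>j. (p * a^(2*Suc j) + q * b^(2*Suc j))
              / (L^(2*Suc j) * (2*real (Suc j) - 1) * (2*real (Suc j)) * (2*real (Suc j) + 1)))
           sums (p * triple_product_series (a/L) + q * triple_product_series (b/L))"
proof -
  have "\<bar>a/L\<bar> < 1" "a/L \<noteq> 0" "\<bar>b/L\<bar> < 1" "b/L \<noteq> 0"
    using assms by auto
  then have "(\<lambda>j. p * ((a/L)^(2*Suc j) / ((2*real (Suc j) - 1) * (2*real (Suc j)) * (2*real (Suc j) + 1)))
               + q * ((b/L)^(2*Suc j) / ((2*real (Suc j) - 1) * (2*real (Suc j)) * (2*real (Suc j) + 1))))
           sums (p * triple_product_series (a/L) + q * triple_product_series (b/L))"
    by (intro sums_add sums_mult triple_product_series_sums)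
  then show ?thesis
    by (simp add: power_divide add_divide_distrib mult.assoc)
qed

lemma fib_alpha_pos: "fib_alpha > 0"
  unfolding fib_alpha_def by (simp add: add_pos_nonneg)

lemma fib_beta_neg: "fib_beta < 0"
  unfolding fib_beta_def by simp

lemma fib_alpha_times_beta: "fib_alpha * fib_beta = -1"
  unfolding fib_alpha_def fib_beta_def by (simp add: field_simps)

lemma fib_alpha_minus_beta: "fib_alpha - fib_beta = sqrt 5"
  unfolding fib_alpha_def fib_beta_def by (simp add: field_simps)

lemma Fib_times_sqrt5: "Fib n * sqrt 5 = fib_alpha powi n - fib_beta powi n"
  unfolding Fib_def fib_alpha_minus_beta by simp

lemma fib_beta_powi_even_pos:
  assumes "even r"
  shows "fib_beta powi r > 0"
proof -
  have "(- fib_beta) powi r > 0" using fib_beta_neg by simp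
  then show ?thesis using assms by simp
qed

lemma fib_alpha_beta_powi_even: "even r \<Longrightarrow> fib_alpha powi r * fib_beta powi r = 1"
  by (simp add: power_int_mult_distrib[symmetric] fib_alpha_times_beta)

lemma powi_mult_add:
  fixes x :: "'a :: field"
  assumes "x \<noteq> 0"
  shows "x powi (r * int n + s) = (x powi r)^n * x powi s"
  using assms by (simp add: power_int_add power_int_mult)

lemma Luc_mult_add:
  "Luc (r * int n + s) = fib_alpha powi s * (fib_alpha powi r)^n + fib_beta powi s * (fib_beta powi r)^n"
  using fib_alpha_pos fib_beta_neg by (simp add: Luc_def powi_mult_add mult.commute)

lemma Fib_mult_add:
  "Fib (r * int n + s)
     = fib_alpha powi s / sqrt 5 * (fib_alpha powi r)^n + - (fib_beta powi s / sqrt 5) * (fib_beta powi r)^n"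
  using fib_alpha_pos fib_beta_neg
  by (simp add: Fib_def fib_alpha_minus_beta powi_mult_add diff_divide_distrib mult.commute)

theorem theorem12:
  fixes r s :: int
  assumes "even r"
  shows "(\<lambda>j. let k = Suc j in
            Luc (2*r*int k + s) / (Luc r ^ (2*k) * (2*real k - 1) * (2*real k) * (2*real k + 1)))
         sums
         (1/4 * Fib s * sqrt 5 * ln ((fib_beta powi r * Luc r + 1) / (fib_alpha powi r * Luc r + 1))
          + 1/4 * Luc s * ln ((2 * (Luc r)\<^sup>2 + 1) / Luc r ^ 4) - Luc s / 2
          + 1/8 * (Luc r)\<^sup>2 * Fib s * sqrt 5 * ln ((Luc r + fib_alpha powi r) / (Luc r + fib_beta powi r) * fib_alpha powi (2*r))
          + 1/8 * (Luc r)\<^sup>2 * Luc s * ln (2 * (Luc r)\<^sup>2 + 1)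
          - ((Luc r)\<^sup>2 - 1) / (8 * Luc r) * Fib (r + s) * sqrt 5 * ln ((Luc r + fib_alpha powi r) / (Luc r + fib_beta powi r) * fib_alpha powi (2*r))
          - ((Luc r)\<^sup>2 - 1) / (8 * Luc r) * Luc (r + s) * ln (2 * (Luc r)\<^sup>2 + 1))
       \<and> (\<lambda>j. let k = Suc j in
            Fib (2*r*int k + s) / (Luc r ^ (2*k) * (2*real k - 1) * (2*real k) * (2*real k + 1)))
         sums
         (1/4 * Luc s / sqrt 5 * ln ((fib_beta powi r * Luc r + 1) / (fib_alpha powi r * Luc r + 1))
          + 1/4 * Fib s * ln ((2 * (Luc r)\<^sup>2 + 1) / Luc r ^ 4) - Fib s / 2
          + 1/8 * (Luc r)\<^sup>2 * Luc s / sqrt 5 * ln ((Luc r + fib_alpha powi r) / (Luc r + fib_beta powi r) * fib_alpha powi (2*r))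
          + 1/8 * (Luc r)\<^sup>2 * Fib s * ln (2 * (Luc r)\<^sup>2 + 1)
          - ((Luc r)\<^sup>2 - 1) / (8 * Luc r) * Luc (r + s) / sqrt 5 * ln ((Luc r + fib_alpha powi r) / (Luc r + fib_beta powi r) * fib_alpha powi (2*r))
          - ((Luc r)\<^sup>2 - 1) / (8 * Luc r) * Fib (r + s) * ln (2 * (Luc r)\<^sup>2 + 1))"
proof -
  define a b where "a = fib_alpha powi r" and "b = fib_beta powi r"
  define p q where "p = fib_alpha powi s" and "q = fib_beta powi s"
  have ab: "a > 0" "b > 0" "a * b = 1" "Luc r = a + b"
    using fib_alpha_pos fib_beta_powi_even_pos[OF assms] fib_alpha_beta_powi_even[OF assms]
    by (simp_all add: a_def b_def Luc_def)
  have index: "2*r*int k + s = r * int (2*k) + s" for k by simp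
  have luc_values: "p - q = Fib s * sqrt 5" "p + q = Luc s"
    "a * p - b * q = Fib (r + s) * sqrt 5" "a * p + b * q = Luc (r + s)"
    using fib_alpha_pos fib_beta_neg
    by (simp_all add: Fib_times_sqrt5 Luc_def p_def q_def a_def b_def power_int_add)
  then have fib_values: "p / sqrt 5 - - (q / sqrt 5) = Luc s / sqrt 5" "p / sqrt 5 + - (q / sqrt 5) = Fib s"
    "a * (p / sqrt 5) - b * - (q / sqrt 5) = Luc (r + s) / sqrt 5"
    "a * (p / sqrt 5) + b * - (q / sqrt 5) = Fib (r + s)"
    by (simp_all add: field_simps)
  have "fib_alpha powi (2*r) = a\<^sup>2"
    unfolding a_def by (simp add: power_int_mult mult.commute[of 2])
  then show ?thesis
    using sums_triple_product_series_pair[OF ab(1,2,4), of p q]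
      sums_triple_product_series_pair[OF ab(1,2,4), of "p / sqrt 5" "- (q / sqrt 5)"]
    unfolding triple_product_series_pair_closed_form[OF ab] Let_def index Luc_mult_add Fib_mult_add
      luc_values fib_values a_def[symmetric] b_def[symmetric] p_def[symmetric] q_def[symmetric]
    by (simp add: mult.assoc)
qed

end
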